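(* Assume one of the following holds: (i) $\mathcal A^\infty\subset\mathcal X_+$ and there exists no scalable arbitrage opportunity; (ii) $\mathcal P^\infty\subset\mathbb R^N_+$, $V_1(x)\in\mathcal X_+$ for every $x\in\mathbb R^N_+$, and there exists no scalable arbitrage opportunity; (iii) $\mathcal P$ is bounded. Then there exists no scalable acceptable deal. Under (iii), moreover, $\mathcal L=\{0\}$.
   Context: Standing setup: Let $\mathcal{X}$ be a real topological vector space partially ordered by a convex cone $\mathcal{X}_+\subset\mathcal X$; write $X\ge Y$ iff $X-Y\in\mathcal X_+$. Fix $N\in\mathbb N$ and: a set $\mathcal P\subset\mathbb R^N$ with $0\in\mathcal P$; a function $V_0:\mathbb R^N\to\mathbb R$ with $V_0(0)=0$ and $V_0(x)\ge -V_0(-x)$ for all $x\in\mathbb R^N$; a map $V_1:\mathbb R^N\to\mathcal X$ with $V_1(0)=0$ and $V_1(x)\le -V_1(-x)$ for all $x\in\mathbb R^N$; a set $\mathcal A\subset\mathcal X$ with $0\in\mathcal A$ and $\mathcal A+\mathcal X_+\subset\mathcal A$. Asymptotic notions: for a nonempty set $C$ in a topological vector space, $C^\infty=\{X:\exists\text{ nets }(X_\alpha)\subset C,\ (\lambda_\alpha)\subset[0,\infty),\ \lambda_\alpha\to0,\ \lambda_\alpha X_\alpha\to X\}$. For $f:\mathbb R^N\to\mathbb R$, its asymptotic function $f^\infty:\mathbb R^N\to[-\infty,\infty]$ is the function whose epigraph $\{(x,m)\in\mathbb R^N\times\mathbb R: f^\infty(x)\le m\}$ equals $(\operatorname{epi}f)^\infty$,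 where $\operatorname{epi}f=\{(x,m)\in\mathbb R^N\times\mathbb R: f(x)\le m\}$. A portfolio $x\in\mathbb R^N$ is a scalable acceptable deal if $x\in\mathcal P^\infty$, $V_0^\infty(x)\le0$ and $V_1(x)\in\mathcal A^\infty\setminus\{0\}$; it is a scalable arbitrage opportunity if $x\in\mathcal P^\infty$, $V_0^\infty(x)\le0$ and $V_1(x)\in(\mathcal X_+)^\infty\setminus\{0\}$. Define $\mathcal L=\{x\in\mathcal P^\infty: V_0^\infty(x)\le0,\ V_1(x)\in\mathcal A^\infty\}$. $\mathbb R^N_+$ denotes vectors with nonnegative components. *)

theory Defs
  imports "HOL-Analysis.Analysis"
begin

text \<open>Asymptotic cone, nets rendered as (proper) filters on index pairs (lambda, X).\<close>
definition asym_cone :: "'a::{real_vector,topological_space} set \<Rightarrow> 'a set" where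
  "asym_cone C = {X. \<exists>F :: (real \<times> 'a) filter. F \<noteq> bot \<and>
      eventually (\<lambda>p. 0 \<le> fst p \<and> snd p \<in> C) F \<and>
      (fst \<longlongrightarrow> 0) F \<and> ((\<lambda>p. fst p *\<^sub>R snd p) \<longlongrightarrow> X) F}"

definition epi :: "(real^'n \<Rightarrow> real) \<Rightarrow> ((real^'n) \<times> real) set" where
  "epi f = {(x, m). f x \<le> m}"

definition asym_fun :: "(real^'n \<Rightarrow> real) \<Rightarrow> real^'n \<Rightarrow> ereal" where
  "asym_fun f x = Inf {ereal m | m. (x, m) \<in> asym_cone (epi f)}"

definition nonneg_orthant :: "(real^'n) set" where
  "nonneg_orthant = {x. \<forall>i. 0 \<le> x $ i}"

definition scalable_acceptable_deal ::
  "(real^'n) set \<Rightarrow> (real^'n \<Rightarrow> real) \<Rightarrow> (real^'n \<Rightarrow> 'x::{real_vector,topological_ab_group_add}) \<Rightarrow> 'x set \<Rightarrow> real^'n \<Rightarrow> bool" where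
  "scalable_acceptable_deal P V0 V1 A x \<longleftrightarrow>
     x \<in> asym_cone P \<and> asym_fun V0 x \<le> 0 \<and> V1 x \<in> asym_cone A - {0}"

definition scalable_arbitrage ::
  "(real^'n) set \<Rightarrow> (real^'n \<Rightarrow> real) \<Rightarrow> (real^'n \<Rightarrow> 'x::{real_vector,topological_ab_group_add}) \<Rightarrow> 'x set \<Rightarrow> real^'n \<Rightarrow> bool" where
  "scalable_arbitrage P V0 V1 Xp x \<longleftrightarrow>
     x \<in> asym_cone P \<and> asym_fun V0 x \<le> 0 \<and> V1 x \<in> asym_cone Xp - {0}"

definition LL ::
  "(real^'n) set \<Rightarrow> (real^'n \<Rightarrow> real) \<Rightarrow> (real^'n \<Rightarrow> 'x::{real_vector,topological_ab_group_add}) \<Rightarrow> 'x set \<Rightarrow> (real^'n) set" where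
  "LL P V0 V1 A = {x \<in> asym_cone P. asym_fun V0 x \<le> 0 \<and> V1 x \<in> asym_cone A}"

end

theory Submission
  imports Defs
begin

text \<open>A scalable acceptable deal x whose payoff V1 x lies in the cone \<open>\<X>\<^sub>+\<close> is already a
scalable arbitrage opportunity, because a cone is contained in its asymptotic cone. Under (i)
this holds since \<open>\<A>\<^sup>\<infinity> \<subseteq> \<X>\<^sub>+\<close>, under (ii) since \<open>x \<in> \<P>\<^sup>\<infinity> \<subseteq> \<real>\<^sup>N\<^sub>+\<close>. Under (iii) the asymptotic
cone of the bounded set \<open>\<P>\<close> is \<open>{0}\<close>, and V1 0 = 0 is not a nonzero payoff.\<close>

lemma zero_in_asym_cone:
  fixes C :: "'a::{real_vector,topological_space} set"
  assumes "0 \<in> C"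
  shows "0 \<in> asym_cone C"
  unfolding asym_cone_def
proof (intro CollectI exI[of _ "principal {(0::real, 0::'a)}"] conjI)
  show "principal {(0::real, 0::'a)} \<noteq> bot"
    by (simp add: principal_eq_bot_iff)
  show "eventually (\<lambda>p. 0 \<le> fst p \<and> snd p \<in> C) (principal {(0::real, 0::'a)})"
    using assms by (simp add: eventually_principal)
  show "(fst \<longlongrightarrow> 0) (principal {(0::real, 0::'a)})"
    by (rule tendsto_eventually) (simp add: eventually_principal)
  show "((\<lambda>p. fst p *\<^sub>R snd p) \<longlongrightarrow> 0) (principal {(0::real, 0::'a)})"
    by (rule tendsto_eventually) (simp add: eventually_principal)
qed

lemma conic_subset_asym_cone:
  fixes C :: "'a::{real_vector,topological_space} set"
  assumes "conic C"
  shows "C \<subseteq> asym_cone C"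
proof
  fix X assume X: "X \<in> C"
  let ?F = "filtermap (\<lambda>n. (inverse (real (Suc n)), real (Suc n) *\<^sub>R X)) sequentially"
  have "?F \<noteq> bot"
    by (simp add: filtermap_bot_iff)
  moreover have "eventually (\<lambda>p. 0 \<le> fst p \<and> snd p \<in> C) ?F"
    using assms X unfolding eventually_filtermap conic_def
    by (auto intro!: always_eventually)
  moreover have "(fst \<longlongrightarrow> 0) ?F"
    unfolding filterlim_filtermap o_def using LIMSEQ_inverse_real_of_nat by simp
  moreover have "((\<lambda>p. fst p *\<^sub>R snd p) \<longlongrightarrow> X) ?F"
    unfolding filterlim_filtermap o_def by simp
  ultimately show "X \<in> asym_cone C"
    unfolding asym_cone_def by blast
qed

lemma asym_cone_bounded:
  fixes C :: "'a::real_normed_vector set"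
  assumes "bounded C" and "X \<in> asym_cone C"
  shows "X = 0"
proof -
  obtain F :: "(real \<times> 'a) filter" where F: "F \<noteq> bot"
    "eventually (\<lambda>p. 0 \<le> fst p \<and> snd p \<in> C) F" "(fst \<longlongrightarrow> 0) F"
    "((\<lambda>p. fst p *\<^sub>R snd p) \<longlongrightarrow> X) F"
    using assms(2) unfolding asym_cone_def by auto
  obtain B where B: "\<And>y. y \<in> C \<Longrightarrow> norm y \<le> B"
    using assms(1) bounded_iff by blast
  have "((\<lambda>p. \<bar>fst p\<bar> * B) \<longlongrightarrow> 0) F"
    using tendsto_mult[OF tendsto_rabs[OF F(3)] tendsto_const[of B]] by simp
  moreover have "eventually (\<lambda>p. norm (fst p *\<^sub>R snd p) \<le> \<bar>fst p\<bar> * B) F"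
    using F(2) by eventually_elim (auto intro: mult_left_mono B)
  ultimately have "((\<lambda>p. fst p *\<^sub>R snd p) \<longlongrightarrow> 0) F"
    by (rule Lim_null_comparison[rotated])
  then show ?thesis
    using tendsto_unique[OF F(1) F(4)] by simp
qed

lemma asym_fun_zero_nonpos:
  assumes "f 0 \<le> 0"
  shows "asym_fun f 0 \<le> 0"
proof -
  have "(0, 0) \<in> asym_cone (epi f)"
    using zero_in_asym_cone[of "epi f"] assms by (simp add: epi_def zero_prod_def)
  then show ?thesis
    unfolding asym_fun_def by (metis (mono_tags, lifting) Inf_lower mem_Collect_eq zero_ereal_def)
qed

lemma scalable_arbitrage_if_acceptable_deal_in_cone:
  assumes "scalable_acceptable_deal P V0 V1 A x" and "conic Xp" and "V1 x \<in> Xp"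
  shows "scalable_arbitrage P V0 V1 Xp x"
  using assms conic_subset_asym_cone[OF assms(2)]
  unfolding scalable_acceptable_deal_def scalable_arbitrage_def by auto

lemma no_scalable_acceptable_deal_if_bounded:
  assumes "bounded P" and "V1 0 = 0"
  shows "\<not> scalable_acceptable_deal P V0 V1 A x"
  using assms asym_cone_bounded unfolding scalable_acceptable_deal_def by fastforce

lemma LL_bounded:
  assumes "bounded P" and "0 \<in> P" and "V0 0 = 0" and "V1 0 = 0" and "0 \<in> A"
  shows "LL P V0 V1 A = {0}"
  using assms asym_cone_bounded[OF assms(1)] zero_in_asym_cone[of P] zero_in_asym_cone[of A]
    asym_fun_zero_nonpos[of V0]
  unfolding LL_def by auto

theorem mainTheorem8:
  fixes Xp :: "'x::{real_vector,topological_ab_group_add} set"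
    and P :: "(real^'n) set"
    and V0 :: "real^'n \<Rightarrow> real"
    and V1 :: "real^'n \<Rightarrow> 'x"
    and A :: "'x set"
  assumes tvs: "continuous_on UNIV (\<lambda>p::real \<times> 'x. fst p *\<^sub>R snd p)"
    and cone: "convex_cone Xp"
    and pointed: "\<And>X. X \<in> Xp \<Longrightarrow> - X \<in> Xp \<Longrightarrow> X = 0"
    and P0: "0 \<in> P"
    and V00: "V0 0 = 0"
    and V0sub: "\<And>x. V0 x \<ge> - V0 (- x)"
    and V10: "V1 0 = 0"
    and V1sup: "\<And>x. - V1 (- x) - V1 x \<in> Xp"
    and A0: "0 \<in> A"
    and Amono: "\<And>X Y. X \<in> A \<Longrightarrow> Y \<in> Xp \<Longrightarrow> X + Y \<in> A"
    and cases: "(asym_cone A \<subseteq> Xp \<and> \<not> (\<exists>x. scalable_arbitrage P V0 V1 Xp x))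
      \<or> (asym_cone P \<subseteq> nonneg_orthant \<and> (\<forall>x\<in>nonneg_orthant. V1 x \<in> Xp)
          \<and> \<not> (\<exists>x. scalable_arbitrage P V0 V1 Xp x))
      \<or> bounded P"
  shows "\<not> (\<exists>x. scalable_acceptable_deal P V0 V1 A x)
    \<and> (bounded P \<longrightarrow> LL P V0 V1 A = {0})"
proof (intro conjI impI notI)
  assume "\<exists>x. scalable_acceptable_deal P V0 V1 A x"
  then obtain x where deal: "scalable_acceptable_deal P V0 V1 A x" ..
  have conic: "conic Xp"
    using cone by (simp add: convex_cone_def)
  from cases show False
  proof (elim disjE conjE)
    assume "asym_cone A \<subseteq> Xp" "\<nexists>x. scalable_arbitrage P V0 V1 Xp x"
    then show False
      using deal scalable_arbitrage_if_acceptable_deal_in_cone[OF deal conic]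
      unfolding scalable_acceptable_deal_def by auto
  next
    assume "asym_cone P \<subseteq> nonneg_orthant" "\<forall>x\<in>nonneg_orthant. V1 x \<in> Xp"
      "\<nexists>x. scalable_arbitrage P V0 V1 Xp x"
    then show False
      using deal scalable_arbitrage_if_acceptable_deal_in_cone[OF deal conic]
      unfolding scalable_acceptable_deal_def by auto
  qed (use deal no_scalable_acceptable_deal_if_bounded V10 in blast)
next
  assume "bounded P"
  then show "LL P V0 V1 A = {0}"
    using LL_bounded P0 V00 V10 A0 by blast
qed

end
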